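(* Let $d\ge4$ be even. Let $C^0=\{L^0_{a,a}\}_{a=0}^{d-1}$ and $C^s=\{L^s_{1,i}\}_{i=0}^{d-1}$ for $s=1,2$. Then $C^0\cup C^1\cup C^2$ consists of $3d$ pairwise disjoint lines on ${\rm F}_d$.
   Context: ${\rm F}_d\subset\mathbb{P}^3(\mathbb{C})$ is the surface $x^d-y^d-z^d+w^d=0$. Fix a primitive $d$-th root of unity $\eta$ and any $v\in\mathbb{C}$ with $v^d=-1$. For $k,i\in\{0,\dots,d-1\}$ define the lines $L^0_{k,i}:\{y=\eta^i x,\ w=\eta^k z\}$, $L^1_{k,i}:\{x=\eta^{k+i}z,\ y=\eta^i w\}$, $L^2_{k,i}:\{x=v\eta^i w,\ y=v\eta^{k+i}z\}$, all lying on ${\rm F}_d$. *)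

theory Defs
  imports Complex_Main
begin

text \<open>Points of P^3(C) are represented by nonzero homogeneous coordinates (x,y,z,w).
  All sets below are closed under nonzero scaling, so containment and disjointness
  of these cones coincide with containment and disjointness in P^3(C).\<close>

type_synonym hpt = "complex \<times> complex \<times> complex \<times> complex"

definition Fermat_surface :: "nat \<Rightarrow> hpt set" where
  "Fermat_surface d = {(x,y,z,w). (x,y,z,w) \<noteq> (0,0,0,0) \<and> x^d - y^d - z^d + w^d = 0}"

definition primitive_root_of_unity :: "nat \<Rightarrow> complex \<Rightarrow> bool" where
  "primitive_root_of_unity d \<eta> \<longleftrightarrow> \<eta> ^ d = 1 \<and> (\<forall>k. 0 < k \<and> k < d \<longrightarrow> \<eta> ^ k \<noteq> 1)"

definition L0 :: "complex \<Rightarrow> nat \<Rightarrow> nat \<Rightarrow> hpt set" where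
  "L0 \<eta> k i = {(x,y,z,w). (x,y,z,w) \<noteq> (0,0,0,0) \<and> y = \<eta>^i * x \<and> w = \<eta>^k * z}"

definition L1 :: "complex \<Rightarrow> nat \<Rightarrow> nat \<Rightarrow> hpt set" where
  "L1 \<eta> k i = {(x,y,z,w). (x,y,z,w) \<noteq> (0,0,0,0) \<and> x = \<eta>^(k+i) * z \<and> y = \<eta>^i * w}"

definition L2 :: "complex \<Rightarrow> complex \<Rightarrow> nat \<Rightarrow> nat \<Rightarrow> hpt set" where
  "L2 \<eta> v k i = {(x,y,z,w). (x,y,z,w) \<noteq> (0,0,0,0) \<and> x = v * \<eta>^i * w \<and> y = v * \<eta>^(k+i) * z}"

end

theory Submission
  imports Defs "HOL-Library.Disjoint_Sets"
begin

text \<open>Each line is given by two linear equations whose coefficients are d-th roots of unity,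
  or v times such roots, so it lies on F_d. Eliminating coordinates from the four equations of
  two lines leaves a relation c z = 0 or c z w = 0, and c is nonzero in every case: lines of one
  family have distinct slopes \<eta>^i; L^0_{a,a} and L^1_{1,i} differ by the factor \<eta> \<noteq> 1;
  L^0_{a,a} \<inter> L^2_{1,i} would need \<eta>^(2a) = \<eta>, impossible for even d; and L^1_{1,i} \<inter> L^2_{1,j}
  would need \<eta>^(2i) = v^2 \<eta>^(2j), whose (d/2)-th power reads 1 = -1. Being nonempty and
  pairwise disjoint, the 3d lines are distinct.\<close>

lemma root_of_unity_power_mod:
  fixes \<eta> :: "'a::monoid_mult"
  assumes "\<eta> ^ d = 1"
  shows "\<eta> ^ (n mod d) = \<eta> ^ n"
proof -
  have "\<eta> ^ n = \<eta> ^ (d * (n div d) + n mod d)"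
    by simp
  also have "\<dots> = (\<eta> ^ d) ^ (n div d) * \<eta> ^ (n mod d)"
    by (simp only: power_add power_mult)
  finally show ?thesis
    using assms by simp
qed

lemma root_of_unity_power:
  fixes \<eta> :: "'a::monoid_mult"
  assumes "\<eta> ^ d = 1"
  shows "(\<eta> ^ i) ^ d = 1"
proof -
  have "(\<eta> ^ i) ^ d = (\<eta> ^ d) ^ i"
    by (simp add: mult.commute flip: power_mult)
  with assms show ?thesis
    by simp
qed

lemma primitive_root_of_unity_nonzero:
  assumes "primitive_root_of_unity d \<eta>" "0 < d"
  shows "\<eta> \<noteq> 0"
  using assms by (auto simp: primitive_root_of_unity_def power_0_left)

lemma primitive_root_power_eq_iff:
  assumes "primitive_root_of_unity d \<eta>" "0 < d"
  shows "\<eta> ^ a = \<eta> ^ b \<longleftrightarrow> a mod d = b mod d"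
proof
  have root: "\<eta> ^ d = 1" and minimal: "\<And>k. 0 < k \<Longrightarrow> k < d \<Longrightarrow> \<eta> ^ k \<noteq> 1"
    using assms(1) by (auto simp: primitive_root_of_unity_def)
  have "\<eta> \<noteq> 0"
    using assms by (rule primitive_root_of_unity_nonzero)
  have le_imp_eq: "r = s" if "s < d" "r \<le> s" "\<eta> ^ r = \<eta> ^ s" for r s
  proof (rule ccontr)
    assume "r \<noteq> s"
    have "\<eta> ^ r * \<eta> ^ (s - r) = \<eta> ^ r * 1"
      using that by (metis le_add_diff_inverse mult_1_right power_add)
    then have "\<eta> ^ (s - r) = 1"
      using \<open>\<eta> \<noteq> 0\<close> by simp
    moreover have "0 < s - r" "s - r < d"
      using that \<open>r \<noteq> s\<close> by auto
    ultimately show False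
      using minimal by blast
  qed
  assume "\<eta> ^ a = \<eta> ^ b"
  then have "\<eta> ^ (a mod d) = \<eta> ^ (b mod d)"
    by (simp add: root_of_unity_power_mod root)
  then show "a mod d = b mod d"
    using le_imp_eq[of "a mod d" "b mod d"] le_imp_eq[of "b mod d" "a mod d"] assms(2)
    by (metis linorder_le_cases mod_less_divisor)
next
  assume "a mod d = b mod d"
  then show "\<eta> ^ a = \<eta> ^ b"
    using assms(1) by (metis primitive_root_of_unity_def root_of_unity_power_mod)
qed

lemma L0_subset_Fermat_surface:
  assumes "\<eta> ^ d = 1"
  shows "L0 \<eta> k i \<subseteq> Fermat_surface d"
  using root_of_unity_power[OF assms]
  by (auto simp: L0_def Fermat_surface_def power_mult_distrib)

lemma L1_subset_Fermat_surface:
  assumes "\<eta> ^ d = 1"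
  shows "L1 \<eta> k i \<subseteq> Fermat_surface d"
  using root_of_unity_power[OF assms]
  by (auto simp: L1_def Fermat_surface_def power_mult_distrib)

lemma L2_subset_Fermat_surface:
  assumes "\<eta> ^ d = 1" "v ^ d = -1"
  shows "L2 \<eta> v k i \<subseteq> Fermat_surface d"
  using root_of_unity_power[OF assms(1)] assms(2)
  by (auto simp: L2_def Fermat_surface_def power_mult_distrib)

lemma L0_Int_L0:
  assumes "\<eta> ^ i \<noteq> \<eta> ^ i'" "\<eta> ^ k \<noteq> \<eta> ^ k'"
  shows "L0 \<eta> k i \<inter> L0 \<eta> k' i' = {}"
  using assms by (auto simp: L0_def)

lemma L1_Int_L1:
  assumes "\<eta> ^ (k + i) \<noteq> \<eta> ^ (k' + i')" "\<eta> ^ i \<noteq> \<eta> ^ i'"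
  shows "L1 \<eta> k i \<inter> L1 \<eta> k' i' = {}"
  using assms by (auto simp: L1_def)

lemma L2_Int_L2:
  assumes "v \<noteq> 0" "\<eta> ^ i \<noteq> \<eta> ^ i'" "\<eta> ^ (k + i) \<noteq> \<eta> ^ (k' + i')"
  shows "L2 \<eta> v k i \<inter> L2 \<eta> v k' i' = {}"
  using assms by (auto simp: L2_def)

lemma L0_Int_L1:
  fixes \<eta> :: complex
  assumes "\<eta> \<noteq> 0" "\<eta> ^ (i + k') \<noteq> \<eta> ^ k"
  shows "L0 \<eta> k i \<inter> L1 \<eta> k' j = {}"
proof -
  have False if "(x, y, z, w) \<in> L0 \<eta> k i" "(x, y, z, w) \<in> L1 \<eta> k' j" for x y z w
  proof -
    have eqs: "y = \<eta> ^ i * x" "w = \<eta> ^ k * z" "x = \<eta> ^ (k' + j) * z" "y = \<eta> ^ j * w"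
      using that by (auto simp: L0_def L1_def)
    have "\<eta> ^ i * x = \<eta> ^ j * w"
      using eqs(1,4) by simp
    then have "\<eta> ^ i * (\<eta> ^ (k' + j) * z) = \<eta> ^ j * (\<eta> ^ k * z)"
      using eqs(2,3) by simp
    then have "\<eta> ^ j * (\<eta> ^ (i + k') - \<eta> ^ k) * z = 0"
      by (simp add: power_add algebra_simps)
    then have "z = 0"
      using assms by simp
    with that show False
      by (auto simp: L0_def L1_def)
  qed
  then show ?thesis by auto
qed

lemma L0_Int_L2:
  fixes \<eta> :: complex
  assumes "\<eta> \<noteq> 0" "v \<noteq> 0" "\<eta> ^ (i + k) \<noteq> \<eta> ^ k'"
  shows "L0 \<eta> k i \<inter> L2 \<eta> v k' j = {}"
proof -
  have False if "(x, y, z, w) \<in> L0 \<eta> k i" "(x, y, z, w) \<in> L2 \<eta> v k' j" for x y z w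
  proof -
    have eqs: "y = \<eta> ^ i * x" "w = \<eta> ^ k * z" "x = v * \<eta> ^ j * w" "y = v * \<eta> ^ (k' + j) * z"
      using that by (auto simp: L0_def L2_def)
    have "v * \<eta> ^ j * (\<eta> ^ (i + k) - \<eta> ^ k') * z
        = \<eta> ^ i * (v * \<eta> ^ j * (\<eta> ^ k * z)) - v * \<eta> ^ (k' + j) * z"
      unfolding power_add by (simp add: algebra_simps)
    also have "\<dots> = 0"
      using eqs by (metis diff_self)
    finally have "v * \<eta> ^ j * (\<eta> ^ (i + k) - \<eta> ^ k') * z = 0" .
    then have "z = 0"
      using assms by simp
    with that show False
      by (auto simp: L0_def L2_def)
  qed
  then show ?thesis by auto
qed

lemma L1_Int_L2:
  fixes \<eta> :: complex
  assumes "\<eta> \<noteq> 0" "\<eta> ^ (2 * i) \<noteq> v\<^sup>2 * \<eta> ^ (2 * j)"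
  shows "L1 \<eta> k i \<inter> L2 \<eta> v k j = {}"
proof -
  have False if "(x, y, z, w) \<in> L1 \<eta> k i" "(x, y, z, w) \<in> L2 \<eta> v k j" for x y z w
  proof -
    have eqs: "x = \<eta> ^ (k + i) * z" "y = \<eta> ^ i * w" "x = v * \<eta> ^ j * w" "y = v * \<eta> ^ (k + j) * z"
      using that by (auto simp: L1_def L2_def)
    have "\<eta> ^ k * (\<eta> ^ (2 * i) - v\<^sup>2 * \<eta> ^ (2 * j)) * (z * w)
        = (\<eta> ^ (k + i) * z) * (\<eta> ^ i * w) - (v * \<eta> ^ j * w) * (v * \<eta> ^ (k + j) * z)"
      unfolding power_even_eq power2_eq_square power_add by (simp add: algebra_simps)
    also have "\<dots> = 0"
      using eqs by simp
    finally have "\<eta> ^ k * (\<eta> ^ (2 * i) - v\<^sup>2 * \<eta> ^ (2 * j)) * (z * w) = 0" .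
    then have "z = 0 \<or> w = 0"
      using assms by simp
    with that assms(1) show False
      by (auto simp: L1_def L2_def)
  qed
  then show ?thesis by auto
qed

lemma root_of_unity_square_ne:
  fixes \<eta> v :: complex
  assumes "\<eta> ^ d = 1" "v ^ d = -1" "even d"
  shows "\<eta> ^ (2 * i) \<noteq> v\<^sup>2 * \<eta> ^ (2 * j)"
proof
  assume eq: "\<eta> ^ (2 * i) = v\<^sup>2 * \<eta> ^ (2 * j)"
  obtain m where d: "d = 2 * m"
    using assms(3) by blast
  have "(\<eta> ^ (2 * i)) ^ m = (\<eta> ^ i) ^ d"
    by (simp add: d mult_ac flip: power_mult)
  also have "\<dots> = 1"
    using assms(1) by (rule root_of_unity_power)
  finally have lhs: "(\<eta> ^ (2 * i)) ^ m = 1" .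
  have "(v\<^sup>2 * \<eta> ^ (2 * j)) ^ m = v ^ d * (\<eta> ^ j) ^ d"
    by (simp add: d power_mult_distrib mult_ac flip: power_mult)
  also have "\<dots> = -1"
    using assms(2) root_of_unity_power[OF assms(1)] by simp
  finally have "(v\<^sup>2 * \<eta> ^ (2 * j)) ^ m = -1" .
  with eq lhs show False
    by simp
qed

definition C_line :: "complex \<Rightarrow> complex \<Rightarrow> nat \<Rightarrow> nat \<Rightarrow> hpt set" where
  "C_line \<eta> v s i = (if s = 0 then L0 \<eta> i i else if s = 1 then L1 \<eta> 1 i else L2 \<eta> v 1 i)"

lemma C_line_nonempty: "C_line \<eta> v s i \<noteq> {}"
proof -
  have "(1, \<eta> ^ i, 0, 0) \<in> L0 \<eta> i i" "(\<eta> ^ (1 + i), 0, 1, 0) \<in> L1 \<eta> 1 i"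
    "(0, v * \<eta> ^ (1 + i), 1, 0) \<in> L2 \<eta> v 1 i"
    by (simp_all add: L0_def L1_def L2_def)
  then show ?thesis
    unfolding C_line_def by auto
qed

lemma C_line_subset_Fermat_surface:
  assumes "\<eta> ^ d = 1" "v ^ d = -1"
  shows "C_line \<eta> v s i \<subseteq> Fermat_surface d"
  using L0_subset_Fermat_surface L1_subset_Fermat_surface L2_subset_Fermat_surface assms
  by (simp add: C_line_def)

lemma C_line_Int_C_line_same:
  assumes prim: "primitive_root_of_unity d \<eta>" and "0 < d" "v \<noteq> 0" "i < d" "j < d" "i \<noteq> j"
  shows "C_line \<eta> v s i \<inter> C_line \<eta> v s j = {}"
proof -
  have "\<eta> ^ i \<noteq> \<eta> ^ j"
    using assms primitive_root_power_eq_iff[OF prim \<open>0 < d\<close>] by simp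
  moreover have "\<eta> \<noteq> 0"
    using prim \<open>0 < d\<close> by (rule primitive_root_of_unity_nonzero)
  ultimately have "\<eta> ^ (1 + i) \<noteq> \<eta> ^ (1 + j)"
    by simp
  then show ?thesis
    using \<open>\<eta> ^ i \<noteq> \<eta> ^ j\<close> \<open>v \<noteq> 0\<close>
    by (simp add: C_line_def L0_Int_L0 L1_Int_L1 L2_Int_L2)
qed

lemma C_line_Int_C_line_distinct:
  assumes prim: "primitive_root_of_unity d \<eta>" and "0 < d" "even d" "v ^ d = -1"
    and st: "s < t" "t < 3"
  shows "C_line \<eta> v s i \<inter> C_line \<eta> v t j = {}"
proof -
  have "\<eta> \<noteq> 0"
    using prim \<open>0 < d\<close> by (rule primitive_root_of_unity_nonzero)
  have "v \<noteq> 0"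
    using \<open>v ^ d = -1\<close> \<open>0 < d\<close> by (auto simp: power_0_left)
  have "1 < d"
    using \<open>0 < d\<close> \<open>even d\<close> by (cases "d = 1") auto
  then have "\<eta> \<noteq> 1"
    using prim by (auto simp: primitive_root_of_unity_def)
  then have "\<eta> ^ (i + 1) \<noteq> \<eta> ^ i"
    using \<open>\<eta> \<noteq> 0\<close> by simp
  have "\<eta> ^ (i + i) \<noteq> \<eta> ^ 1"
  proof
    assume "\<eta> ^ (i + i) = \<eta> ^ 1"
    then have "(i + i) mod d = 1 mod d"
      using primitive_root_power_eq_iff[OF prim \<open>0 < d\<close>] by blast
    then have "(i + i) mod 2 = 1 mod 2"
      using \<open>even d\<close> by (metis mod_mod_cancel)
    then show False
      by presburger
  qed
  have "\<eta> ^ (2 * i) \<noteq> v\<^sup>2 * \<eta> ^ (2 * j)"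
    using prim \<open>v ^ d = -1\<close> \<open>even d\<close>
    by (intro root_of_unity_square_ne) (simp_all add: primitive_root_of_unity_def)
  consider "s = 0" "t = 1" | "s = 0" "t = 2" | "s = 1" "t = 2"
    using st by (auto simp: numeral_3_eq_3 less_Suc_eq)
  then show ?thesis
  proof cases
    case 1
    then show ?thesis
      using L0_Int_L1[OF \<open>\<eta> \<noteq> 0\<close> \<open>\<eta> ^ (i + 1) \<noteq> \<eta> ^ i\<close>] by (simp add: C_line_def)
  next
    case 2
    then show ?thesis
      using L0_Int_L2[OF \<open>\<eta> \<noteq> 0\<close> \<open>v \<noteq> 0\<close> \<open>\<eta> ^ (i + i) \<noteq> \<eta> ^ 1\<close>] by (simp add: C_line_def)
  next
    case 3
    then show ?thesis
      using L1_Int_L2[OF \<open>\<eta> \<noteq> 0\<close> \<open>\<eta> ^ (2 * i) \<noteq> v\<^sup>2 * \<eta> ^ (2 * j)\<close>] by (simp add: C_line_def)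
  qed
qed

lemma disjoint_family_on_C_line:
  assumes "primitive_root_of_unity d \<eta>" "0 < d" "even d" "v ^ d = -1"
  shows "disjoint_family_on (\<lambda>(s, i). C_line \<eta> v s i) ({..<3} \<times> {..<d})"
  unfolding disjoint_family_on_def
proof (clarsimp)
  fix s i t j :: nat
  assume "s < 3" "i < d" "t < 3" "j < d" "s = t \<longrightarrow> i \<noteq> j"
  have "v \<noteq> 0"
    using assms(2,4) by (auto simp: power_0_left)
  show "C_line \<eta> v s i \<inter> C_line \<eta> v t j = {}"
  proof (cases s t rule: linorder_cases)
    case less
    then show ?thesis
      using C_line_Int_C_line_distinct assms \<open>t < 3\<close> by blast
  next
    case equal
    then show ?thesis
      using C_line_Int_C_line_same assms \<open>v \<noteq> 0\<close> \<open>i < d\<close> \<open>j < d\<close> \<open>s = t \<longrightarrow> i \<noteq> j\<close> by blast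
  next
    case greater
    then show ?thesis
      using C_line_Int_C_line_distinct[OF assms greater \<open>s < 3\<close>] by (simp add: Int_commute)
  qed
qed

theorem proposition4p1:
  fixes d :: nat and \<eta> v :: complex
  assumes "d \<ge> 4" and "even d"
    and "primitive_root_of_unity d \<eta>"
    and "v ^ d = -1"
  defines "C \<equiv> (\<lambda>a. L0 \<eta> a a) ` {..<d} \<union> (\<lambda>i. L1 \<eta> 1 i) ` {..<d}
                \<union> (\<lambda>i. L2 \<eta> v 1 i) ` {..<d}"
  shows "card C = 3 * d
     \<and> (\<forall>A\<in>C. A \<subseteq> Fermat_surface d)
     \<and> (\<forall>A\<in>C. \<forall>B\<in>C. A \<noteq> B \<longrightarrow> A \<inter> B = {})"
proof -
  define F where "F = (\<lambda>(s, i). C_line \<eta> v s i)"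
  let ?I = "{..<3} \<times> {..<d}"
  have "{..<3::nat} = {0, 1, 2}"
    by auto
  then have C: "C = F ` ?I"
    by (simp add: C_def F_def C_line_def Times_insert_left image_Un image_image Un_assoc)
  have "disjoint_family_on F ?I"
    unfolding F_def using assms(1-4) by (intro disjoint_family_on_C_line) auto
  moreover have "F p \<noteq> {}" if "p \<in> ?I" for p
    by (simp add: F_def C_line_nonempty split: prod.split)
  ultimately have "disjoint C" "inj_on F ?I"
    unfolding C using disjoint_family_on_iff_disjoint_image by blast+
  have "\<eta> ^ d = 1"
    using assms(3) by (simp add: primitive_root_of_unity_def)
  then have "F p \<subseteq> Fermat_surface d" for p
    using C_line_subset_Fermat_surface[OF _ assms(4)] by (simp add: F_def split: prod.split)
  then have "\<forall>A\<in>C. A \<subseteq> Fermat_surface d"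
    unfolding C by blast
  moreover have "card C = 3 * d"
    using \<open>inj_on F ?I\<close> by (simp add: C card_image card_cartesian_product)
  ultimately show ?thesis
    using \<open>disjoint C\<close> by (simp add: disjoint_def)
qed

end
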